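(* Let $t$ be an integer with $m=2t+1\geq 11$ and $n=2^m+1$. Put $\delta_1=\frac{n}{3}$, $\delta_2=\frac{n-3}{6}$, $\delta_3=\delta_2-2$, $\delta_4=\delta_2-8$, $\delta_5=\delta_2-10$. Then $\delta_1>\delta_2>\delta_3>\delta_4>\delta_5$ are respectively the first, second, third, fourth and fifth largest coset leaders modulo $n$ (i.e. they are coset leaders, and every integer $x$ with $\delta_5<x\leq n-1$ that is a coset leader belongs to $\{\delta_1,\delta_2,\delta_3,\delta_4\}$).
   Context: For $n=2^m+1$ and an integer $x$, the 2-cyclotomic coset of $x$ modulo $n$ is $C_x=\{x\cdot 2^{j} \bmod n : j\geq 0\}\subseteq\{0,1,\dots,n-1\}$. For $0\leq x\leq n-1$, "$x$ is a coset leader" means that $x$ is the smallest element of $C_x$. *)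

theory Defs
  imports Main
begin

definition cyc_coset :: "nat \<Rightarrow> nat \<Rightarrow> nat set" where
  "cyc_coset n x = {(x * 2 ^ j) mod n | j. True}"

definition coset_leader :: "nat \<Rightarrow> nat \<Rightarrow> bool" where
  "coset_leader n x \<longleftrightarrow> x < n \<and> (\<forall>y \<in> cyc_coset n x. x \<le> y)"

end

theory Submission
  imports Defs
begin

text \<open>Write \<open>n = 2\<^sup>m + 1 = 3N\<close>. Since \<open>2\<^sup>m \<equiv> -1 (mod n)\<close>, every coset is closed under
  \<open>z \<mapsto> n - z\<close>; hence \<open>x\<close> is a leader exactly when its orbit under doubling stays in \<open>[x, n - x]\<close>.
  No \<open>x > N\<close> is a leader, since \<open>n - x\<close> or \<open>n - 2x\<close> is smaller, and no \<open>x \<in> (N/2, N)\<close> is one: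
  its orbit would alternate between \<open>(N/2, N) \<union> (2N, 5N/2)\<close> and \<open>(N, 2N)\<close>, yet at the odd step
  \<open>m\<close> it reaches \<open>n - x \<in> (2N, 5N/2)\<close>. The four leaders below \<open>N\<close> are certified by following
  their orbits explicitly, and every other number in \<open>(\<delta>\<^sub>5, \<delta>\<^sub>2)\<close> by exhibiting a smaller
  element of its coset.\<close>

lemma mod_eqI_quotient: "r < n \<Longrightarrow> a = q * n + r \<Longrightarrow> a mod (n::nat) = r"
  by simp

lemma mult_pred_mod:
  fixes z n :: nat
  assumes "0 < z" "z < n"
  shows "z * (n - 1) mod n = n - z"
proof (rule mod_eqI_quotient[where q = "z - 1"])
  show "z * (n - 1) = (z - 1) * n + (n - z)"
    using assms by (cases z) (auto simp: algebra_simps diff_mult_distrib2)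
qed (use assms in simp)

lemma mem_cyc_coset: "x * 2 ^ j mod n \<in> cyc_coset n x"
  by (auto simp: cyc_coset_def)

lemma mult_two_pow_mod_neg:
  fixes m n z :: nat
  assumes "2 ^ m + 1 = n" "0 < z" "z < n"
  shows "z * 2 ^ m mod n = n - z"
proof -
  have "2 ^ m = n - 1"
    using assms(1) by simp
  then show ?thesis
    using mult_pred_mod assms(2,3) by simp
qed

lemma cyc_coset_neg:
  fixes m n x z :: nat
  assumes n: "2 ^ m + 1 = n" and z: "z \<in> cyc_coset n x" "z \<noteq> 0"
  shows "n - z \<in> cyc_coset n x"
proof -
  obtain j where j: "z = x * 2 ^ j mod n"
    using z(1) by (auto simp: cyc_coset_def)
  have "x * 2 ^ (j + m) mod n = z * 2 ^ m mod n"
    by (simp add: j power_add mod_mult_left_eq mult.assoc)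
  also have "\<dots> = n - z"
    using j z(2) n by (intro mult_two_pow_mod_neg) auto
  finally show ?thesis
    by (metis mem_cyc_coset)
qed

lemma cyc_coset_double:
  assumes "z \<in> cyc_coset n x"
  shows "2 * z mod n \<in> cyc_coset n x"
proof -
  obtain j where "z = x * 2 ^ j mod n"
    using assms by (auto simp: cyc_coset_def)
  then have "2 * z mod n = x * 2 ^ Suc j mod n"
    by (simp add: mod_mult_right_eq ac_simps)
  then show ?thesis
    by (metis mem_cyc_coset)
qed

lemma not_coset_leader_if_smaller: "z \<in> cyc_coset n x \<Longrightarrow> z < x \<Longrightarrow> \<not> coset_leader n x"
  unfolding coset_leader_def by (meson not_le)

lemma coset_leader_bounds:
  fixes m n x z :: nat
  assumes n: "2 ^ m + 1 = n" and x: "coset_leader n x" "0 < x" and z: "z \<in> cyc_coset n x"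
  shows "x \<le> z \<and> z \<le> n - x"
proof -
  have "x \<le> z"
    using x(1) z by (auto simp: coset_leader_def)
  moreover have "z < n"
    using z n by (auto simp: cyc_coset_def)
  moreover have "x \<le> n - z"
    using x cyc_coset_neg[OF n z] \<open>x \<le> z\<close> by (auto simp: coset_leader_def)
  ultimately show ?thesis
    by linarith
qed

lemma not_coset_leader_by_negated_witness:
  fixes m n x j w :: nat
  assumes "2 ^ m + 1 = n" "x * 2 ^ j mod n = w" "0 < w" "n - w < x"
  shows "\<not> coset_leader n x"
  using assms cyc_coset_neg[OF assms(1) mem_cyc_coset[of x j n]]
  by (intro not_coset_leader_if_smaller[of "n - w"]) auto

lemma double_neg_mod:
  fixes n y :: nat
  assumes "odd n" "0 < y" "y < n"
  shows "2 * (n - y) mod n = n - 2 * y mod n"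
proof (cases "2 * y < n")
  case True
  then show ?thesis
    using assms by (intro mod_eqI_quotient[where q = 1]) auto
next
  case False
  then have "n < 2 * y"
    using \<open>odd n\<close> by (metis dvd_triv_left linorder_neqE_nat)
  then have "2 * y mod n = 2 * y - n"
    using assms by (intro mod_eqI_quotient[where q = 1]) auto
  then show ?thesis
    using \<open>n < 2 * y\<close> assms by simp
qed

text \<open>Doubling commutes with negation modulo an odd \<open>n\<close>, so once the orbit of \<open>x\<close> reaches
  \<open>n - x\<close> it continues as the negation of what came before.\<close>
lemma coset_leader_by_invariant:
  fixes n x :: nat and P :: "nat set"
  assumes "x < n" "odd n" "x \<in> P"
    and bounds: "\<And>y. y \<in> P \<Longrightarrow> 0 < y \<and> y < n \<and> x \<le> y \<and> y \<le> n - x"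
    and step: "\<And>y. y \<in> P \<Longrightarrow> 2 * y mod n \<in> P \<or> 2 * y mod n = n - x"
  shows "coset_leader n x"
proof -
  have orbit: "x * 2 ^ j mod n \<in> P \<union> (\<lambda>y. n - y) ` P" for j
  proof (induction j)
    case 0
    then show ?case
      using assms by simp
  next
    case (Suc j)
    have next_eq: "x * 2 ^ Suc j mod n = 2 * (x * 2 ^ j mod n) mod n"
      by (simp add: mod_mult_right_eq ac_simps)
    from Suc consider "x * 2 ^ j mod n \<in> P" | y where "y \<in> P" "x * 2 ^ j mod n = n - y"
      by blast
    then show ?case
    proof cases
      case 1
      then show ?thesis
        using step[OF 1] next_eq \<open>x \<in> P\<close> by auto
    next
      case (2 y)
      have "2 * (n - y) mod n = n - 2 * y mod n"
        using bounds[OF 2(1)] \<open>odd n\<close> by (intro double_neg_mod) auto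
      then show ?thesis
        using step[OF 2(1)] 2 next_eq \<open>x \<in> P\<close> \<open>x < n\<close> by auto
    qed
  qed
  show ?thesis
    unfolding coset_leader_def cyc_coset_def using orbit bounds \<open>x < n\<close> by fastforce
qed

lemma chain_term_le:
  fixes N s k K :: nat
  assumes "k \<le> K" "2 * (s * 4 ^ K) \<le> N + s"
  shows "2 * (s * 4 ^ k) \<le> N + s"
proof -
  have "(4::nat) ^ k \<le> 4 ^ K"
    using assms(1) by (simp add: power_increasing)
  then have "s * 4 ^ k \<le> s * 4 ^ K"
    by (rule mult_le_mono2)
  then show ?thesis
    using assms(2) by linarith
qed

lemma double_mod_chain:
  fixes n N s k :: nat
  assumes "n = 3 * N" "0 < N"
  shows "2 * (N - s * 4 ^ k) mod n = 2 * N - 2 * (s * 4 ^ k)"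
    and "2 * (s * 4 ^ Suc k) \<le> N + s \<Longrightarrow> 2 * (2 * N - 2 * (s * 4 ^ k)) mod n = N - s * 4 ^ Suc k"
proof -
  show "2 * (N - s * 4 ^ k) mod n = 2 * N - 2 * (s * 4 ^ k)"
    using assms by simp
  assume "2 * (s * 4 ^ Suc k) \<le> N + s"
  then have "8 * (s * 4 ^ k) \<le> N + s"
    by simp
  moreover have "s \<le> s * 4 ^ k"
    by simp
  ultimately have "4 * (s * 4 ^ k) \<le> N"
    by linarith
  then show "2 * (2 * N - 2 * (s * 4 ^ k)) mod n = N - s * 4 ^ Suc k"
    using assms by (intro mod_eqI_quotient[where q = 1]) auto
qed

text \<open>With \<open>N = n/3\<close> and \<open>x = (N - s)/2\<close>, the orbit of \<open>x\<close> runs through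
  \<open>N - s 4\<^sup>k, 2N - 2s 4\<^sup>k\<close> for \<open>k = 0, 1, \<dots>\<close>; these stay in \<open>[x, n - x]\<close> as long as
  \<open>2s 4\<^sup>k \<le> N + s\<close>.\<close>
definition doubling_chain :: "nat \<Rightarrow> nat \<Rightarrow> nat \<Rightarrow> nat set" where
  "doubling_chain N s K = (\<Union>k \<le> K. {N - s * 4 ^ k, 2 * N - 2 * (s * 4 ^ k)})"

lemma doubling_chain_bounds:
  fixes n N x s K y :: nat
  assumes "n = 3 * N" "2 * x + s = N" "s < N" "2 * (s * 4 ^ K) \<le> N + s"
    and "y \<in> doubling_chain N s K"
  shows "0 < y \<and> y < n \<and> x \<le> y \<and> y \<le> n - x"
proof -
  obtain k where k: "k \<le> K" "y = N - s * 4 ^ k \<or> y = 2 * N - 2 * (s * 4 ^ k)"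
    using assms(5) unfolding doubling_chain_def by blast
  define a where "a = s * 4 ^ k"
  have a: "s \<le> a" "2 * a \<le> N + s"
    unfolding a_def using chain_term_le[OF k(1) assms(4)] by simp_all
  from k(2) show ?thesis
  proof
    assume "y = N - s * 4 ^ k"
    then show ?thesis
      using a assms(1-3) unfolding a_def[symmetric] by linarith
  next
    assume "y = 2 * N - 2 * (s * 4 ^ k)"
    then show ?thesis
      using a assms(1-3) unfolding a_def[symmetric] by linarith
  qed
qed

lemma doubling_chain_double:
  fixes n N s K y :: nat
  assumes "n = 3 * N" "odd N" "2 * (s * 4 ^ K) \<le> N + s" "y \<in> doubling_chain N s K"
  shows "2 * y mod n \<in> doubling_chain N s K \<union> {2 * (2 * N - 2 * (s * 4 ^ K)) mod n}"
proof -
  have "0 < N"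
    using assms(2) by (rule odd_pos)
  obtain k where k: "k \<le> K" "y = N - s * 4 ^ k \<or> y = 2 * N - 2 * (s * 4 ^ k)"
    using assms(4) unfolding doubling_chain_def by blast
  consider "y = N - s * 4 ^ k" | "y = 2 * N - 2 * (s * 4 ^ k)" "k < K" | "y = 2 * N - 2 * (s * 4 ^ K)"
    using k by fastforce
  then show ?thesis
  proof cases
    case 1
    then have "2 * y mod n = 2 * N - 2 * (s * 4 ^ k)"
      using double_mod_chain(1)[OF assms(1) \<open>0 < N\<close>] by simp
    then show ?thesis
      using k(1) unfolding doubling_chain_def by blast
  next
    case 2
    then have "2 * y mod n = N - s * 4 ^ Suc k"
      using double_mod_chain(2)[OF assms(1) \<open>0 < N\<close> chain_term_le[OF _ assms(3)]] by simp
    then show ?thesis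
      using \<open>k < K\<close> unfolding doubling_chain_def by (auto simp del: power_Suc)
  next
    case 3
    then show ?thesis
      by simp
  qed
qed

lemma coset_leader_by_doubling_chain:
  fixes n N x s K :: nat and T :: "nat set"
  assumes n: "n = 3 * N" "odd N" and x: "2 * x + s = N" "s < N"
    and K: "2 * (s * 4 ^ K) \<le> N + s"
    and tail_start: "2 * (2 * N - 2 * (s * 4 ^ K)) mod n \<in> T \<union> {n - x}"
    and tail_bounds: "\<And>y. y \<in> T \<Longrightarrow> 0 < y \<and> y < n \<and> x \<le> y \<and> y \<le> n - x"
    and tail_step: "\<And>y. y \<in> T \<Longrightarrow> 2 * y mod n \<in> T \<union> {n - x}"
  shows "coset_leader n x"
proof (rule coset_leader_by_invariant[where P = "{x} \<union> doubling_chain N s K \<union> T"])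
  show "x < n" "odd n" "x \<in> {x} \<union> doubling_chain N s K \<union> T"
    using x n by auto
next
  fix y assume "y \<in> {x} \<union> doubling_chain N s K \<union> T"
  then consider "y = x" | "y \<in> doubling_chain N s K" | "y \<in> T"
    by blast
  note y_cases = this
  then show "0 < y \<and> y < n \<and> x \<le> y \<and> y \<le> n - x"
  proof cases
    case 1
    then show ?thesis
      using x n by simp
  next
    case 2
    then show ?thesis
      by (rule doubling_chain_bounds[OF n(1) x K])
  next
    case 3
    then show ?thesis
      by (rule tail_bounds)
  qed
  from y_cases show "2 * y mod n \<in> {x} \<union> doubling_chain N s K \<union> T \<or> 2 * y mod n = n - x"
  proof cases
    case 1
    have "2 * x mod n = N - s * 4 ^ 0"
      using x n by simp
    then show ?thesis
      unfolding 1 doubling_chain_def by blast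
  next
    case 2
    have "2 * y mod n \<in> doubling_chain N s K \<union> {2 * (2 * N - 2 * (s * 4 ^ K)) mod n}"
      using n K 2 by (rule doubling_chain_double)
    then show ?thesis
      using tail_start by auto
  next
    case 3
    then show ?thesis
      using tail_step by blast
  qed
qed

lemma coset_leader_third:
  fixes n N :: nat
  assumes "n = 3 * N" "odd N"
  shows "coset_leader n N"
  using assms by (intro coset_leader_by_invariant[where P = "{N}"]) (auto simp: odd_pos)

lemma not_coset_leader_above_third:
  fixes m n N x :: nat
  assumes n: "2 ^ m + 1 = n" "n = 3 * N" "odd N" and x: "N < x" "x < n"
  shows "\<not> coset_leader n x"
proof
  assume leader: "coset_leader n x"
  have "x \<in> cyc_coset n x"
    using mem_cyc_coset[of x 0 n] x by simp
  then have "x \<le> n - x" "2 * x mod n \<le> n - x"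
    using coset_leader_bounds[OF n(1) leader] cyc_coset_double x by auto
  moreover have "2 * x \<noteq> n"
    using n(2,3) by presburger
  ultimately show False
    using x n(2) by simp
qed

lemma double_mod_into_middle:
  fixes n N y :: nat
  assumes "n = 3 * N" "(N < 2 * y \<and> y < N) \<or> (2 * N < y \<and> 2 * y < 5 * N)"
  shows "N < 2 * y mod n \<and> 2 * y mod n < 2 * N"
  using assms(2)
proof
  assume "N < 2 * y \<and> y < N"
  then show ?thesis
    using assms(1) by simp
next
  assume y: "2 * N < y \<and> 2 * y < 5 * N"
  then have "2 * y mod n = 2 * y - n"
    using assms(1) by (intro mod_eqI_quotient[where q = 1]) auto
  then show ?thesis
    using y assms(1) by linarith
qed

lemma double_mod_out_of_middle:
  fixes n N x y :: nat
  assumes n: "n = 3 * N" "odd N" and y: "N < y" "y < 2 * N"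
    and x: "N < 2 * x" "x \<le> 2 * y mod n" "2 * y mod n \<le> n - x"
  shows "(N < 2 * (2 * y mod n) \<and> 2 * y mod n < N) \<or> (2 * N < 2 * y mod n \<and> 2 * (2 * y mod n) < 5 * N)"
proof (cases "2 * y < n")
  case True
  then show ?thesis
    using n y x by simp
next
  case False
  moreover have "2 * y \<noteq> n"
    using n by presburger
  ultimately have "2 * y mod n = 2 * y - n"
    using n y by (intro mod_eqI_quotient[where q = 1]) auto
  then show ?thesis
    using n y x by linarith
qed

lemma not_coset_leader_between_sixth_and_third:
  fixes m n N x :: nat
  assumes m: "2 ^ m + 1 = n" "odd m" and n: "n = 3 * N" "odd N" and x: "N < 2 * x" "x < N"
  shows "\<not> coset_leader n x"
proof
  assume leader: "coset_leader n x"
  define y where "y j = x * 2 ^ j mod n" for j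
  have bounds: "x \<le> y j \<and> y j \<le> n - x" for j
    unfolding y_def using coset_leader_bounds[OF m(1) leader] mem_cyc_coset x by simp
  have step: "y (Suc j) = 2 * y j mod n" for j
    by (simp add: y_def mod_mult_right_eq ac_simps)
  have alternate: "(even j \<longrightarrow> (N < 2 * y j \<and> y j < N) \<or> (2 * N < y j \<and> 2 * y j < 5 * N))
      \<and> (odd j \<longrightarrow> N < y j \<and> y j < 2 * N)" for j
  proof (induction j)
    case 0
    then show ?case
      using x n by (simp add: y_def)
  next
    case (Suc j)
    then show ?case
      using double_mod_into_middle[OF n(1)] double_mod_out_of_middle[OF n, of "y j" x]
        bounds[of "Suc j"] x step[of j] by auto
  qed
  have "y m = n - x"
    unfolding y_def using mult_two_pow_mod_neg[OF m(1)] x n by simp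
  then show False
    using alternate[of m] m(2) x n by auto
qed

lemma pow4_mod3: "(4::nat) ^ k mod 3 = 1"
  using power_mod[of "4::nat" 3 k] by simp

text \<open>\<open>R\<close> is defined by \<open>4\<^bsup>t-3\<^esup> = 3R + 1\<close>, so that \<open>n = 384R + 129\<close>, \<open>\<delta>\<^sub>1 = 128R + 43\<close>
  and \<open>\<delta>\<^sub>2 = 64R + 21\<close>.\<close>
locale odd_exponent_modulus =
  fixes t R n :: nat
  assumes t_ge_5: "5 \<le> t"
    and pow4_eq: "4 ^ (t - 3) = 3 * R + 1"
    and n_def: "n = 2 ^ (2 * t + 1) + 1"
begin

lemma n_eq: "n = 384 * R + 129"
proof -
  have "2 * t + 1 = 7 + 2 * (t - 3)"
    using t_ge_5 by simp
  then show ?thesis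
    using n_def by (simp add: power_add power_mult pow4_eq)
qed

lemma R_pos: "0 < R"
proof -
  have "(4::nat) ^ 1 \<le> 4 ^ (t - 3)"
    using t_ge_5 by (intro power_increasing) auto
  then show ?thesis
    using pow4_eq by simp
qed

lemma two_pow_shift: "2 ^ (2 * (t - 3) + j) = 2 ^ j * (3 * R + 1)"
proof -
  have "(2::nat) ^ (2 * (t - 3) + j) = (2 ^ 2) ^ (t - 3) * 2 ^ j"
    by (simp only: power_add power_mult)
  then show ?thesis
    using pow4_eq by simp
qed

lemma coset_leader_delta1: "coset_leader n (128 * R + 43)"
  using coset_leader_third[of n "128 * R + 43"] n_eq by simp

lemma coset_leader_delta2: "coset_leader n (64 * R + 21)"
  by (rule coset_leader_by_doubling_chain[where N = "128 * R + 43" and s = 1 and K = "t - 3 + 2"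
        and T = "{}"]) (simp_all add: n_eq power_add pow4_eq)

lemma coset_leader_delta3: "coset_leader n (64 * R + 19)"
  by (rule coset_leader_by_doubling_chain[where N = "128 * R + 43" and s = 5 and K = "t - 3 + 1"
        and T = "{272 * R + 92, 160 * R + 55}"])
    (simp_all add: n_eq power_add pow4_eq, (elim disjE; simp add: mod_if)+)

lemma coset_leader_delta4: "coset_leader n (64 * R + 13)"
  by (rule coset_leader_by_doubling_chain[where N = "128 * R + 43" and s = 17 and K = "t - 3"
        and T = "{308 * R + 104, 232 * R + 79, 80 * R + 29, 160 * R + 58}"])
    (simp_all add: n_eq pow4_eq, (elim disjE; simp add: mod_if)+)

lemma coset_leader_delta5: "coset_leader n (64 * R + 11)"
  by (rule coset_leader_by_doubling_chain[where N = "128 * R + 43" and s = 21 and K = "t - 3"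
        and T = "{260 * R + 88, 136 * R + 47, 272 * R + 94, 160 * R + 59}"])
    (simp_all add: n_eq pow4_eq, (elim disjE; simp add: mod_if)+)

lemma not_coset_leader_by_negated_witness_shift:
  assumes "x * (2 ^ j * (3 * R + 1)) = q * n + w" "0 < w" "w < n" "n - w < x"
  shows "\<not> coset_leader n x"
proof (rule not_coset_leader_by_negated_witness[where m = "2 * t + 1" and j = "2 * (t - 3) + j"])
  show "2 ^ (2 * t + 1) + 1 = n"
    using n_def by simp
  show "x * 2 ^ (2 * (t - 3) + j) mod n = w"
    unfolding two_pow_shift assms(1) using assms(3) by simp
qed (use assms in auto)

lemma not_coset_leader_by_witness_shift:
  assumes "x * (2 ^ j * (3 * R + 1)) = q * n + w" "w < n" "w < x"
  shows "\<not> coset_leader n x"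
proof (rule not_coset_leader_if_smaller)
  have "x * 2 ^ (2 * (t - 3) + j) mod n = w"
    unfolding two_pow_shift assms(1) using assms(2) by simp
  then show "w \<in> cyc_coset n x"
    by (metis mem_cyc_coset)
qed (use assms in auto)

lemma not_coset_leader_gap:
  assumes "64 * R + 11 < x" "x < 64 * R + 21" "x \<notin> {64 * R + 13, 64 * R + 19}"
  shows "\<not> coset_leader n x"
proof -
  have "\<not> coset_leader n (64 * R + 12)"
    by (rule not_coset_leader_by_negated_witness_shift[where j = 5 and q = "16 * R + 2" and w = "368 * R + 126"])
      (simp_all add: n_eq algebra_simps)
  moreover have "\<not> coset_leader n (64 * R + 14)"
    by (rule not_coset_leader_by_negated_witness_shift[where j = 3 and q = "4 * R" and w = "332 * R + 112"])
      (simp_all add: n_eq algebra_simps, use R_pos in linarith)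
  moreover have "\<not> coset_leader n (64 * R + 15)"
    by (rule not_coset_leader_by_negated_witness_shift[where j = 3 and q = "4 * R" and w = "356 * R + 120"])
      (simp_all add: n_eq algebra_simps)
  moreover have "\<not> coset_leader n (64 * R + 16)"
    by (rule not_coset_leader_by_negated_witness_shift[where j = 3 and q = "4 * R" and w = "380 * R + 128"])
      (simp_all add: n_eq algebra_simps)
  moreover have "\<not> coset_leader n (64 * R + 17)"
    by (rule not_coset_leader_by_witness_shift[where j = 3 and q = "4 * R + 1" and w = "20 * R + 7"])
      (simp_all add: n_eq algebra_simps)
  moreover have "\<not> coset_leader n (64 * R + 18)"
    by (rule not_coset_leader_by_witness_shift[where j = 3 and q = "4 * R + 1" and w = "44 * R + 15"])
      (simp_all add: n_eq algebra_simps)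
  moreover have "\<not> coset_leader n (64 * R + 20)"
    by (rule not_coset_leader_by_negated_witness_shift[where j = 5 and q = "16 * R + 4" and w = "368 * R + 124"])
      (simp_all add: n_eq algebra_simps)
  moreover have "x \<in> {64 * R + 12, 64 * R + 14, 64 * R + 15, 64 * R + 16, 64 * R + 17, 64 * R + 18, 64 * R + 20}"
    using assms by auto
  ultimately show ?thesis
    by auto
qed

lemma coset_leaders_above_delta5:
  assumes "64 * R + 11 < x" "x < n" "coset_leader n x"
  shows "x \<in> {128 * R + 43, 64 * R + 21, 64 * R + 19, 64 * R + 13}"
proof -
  have n: "2 ^ (2 * t + 1) + 1 = n" "n = 3 * (128 * R + 43)" "odd (128 * R + 43)"
    using n_def n_eq by simp_all
  have "\<not> 128 * R + 43 < x"
    using not_coset_leader_above_third[OF n] assms(2,3) by blast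
  moreover have "\<not> (128 * R + 43 < 2 * x \<and> x < 128 * R + 43)"
    using not_coset_leader_between_sixth_and_third[OF n(1) _ n(2,3)] assms(3) by auto
  ultimately have "x = 128 * R + 43 \<or> x \<le> 64 * R + 21"
    by linarith
  then show ?thesis
    using not_coset_leader_gap[of x] assms(1,3) by fastforce
qed

end

theorem theorem3p5:
  fixes t m n :: nat
  assumes "m = 2 * t + 1" and "m \<ge> 11" and "n = 2 ^ m + 1"
  defines "\<delta>1 \<equiv> n div 3"
      and "\<delta>2 \<equiv> (n - 3) div 6"
  shows "3 dvd n \<and> 6 dvd (n - 3)
    \<and> \<delta>1 > \<delta>2 \<and> \<delta>2 > \<delta>2 - 2 \<and> \<delta>2 - 2 > \<delta>2 - 8 \<and> \<delta>2 - 8 > \<delta>2 - 10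
    \<and> coset_leader n \<delta>1 \<and> coset_leader n \<delta>2 \<and> coset_leader n (\<delta>2 - 2)
    \<and> coset_leader n (\<delta>2 - 8) \<and> coset_leader n (\<delta>2 - 10)
    \<and> (\<forall>x. \<delta>2 - 10 < x \<and> x \<le> n - 1 \<and> coset_leader n x
          \<longrightarrow> x \<in> {\<delta>1, \<delta>2, \<delta>2 - 2, \<delta>2 - 8})"
proof -
  obtain R where R: "(4::nat) ^ (t - 3) = 3 * R + 1"
    using pow4_mod3[of "t - 3"] by (metis mod_div_mult_eq add.commute mult.commute)
  interpret odd_exponent_modulus t R n
    using assms(1-3) R by unfold_locales simp_all
  have \<delta>: "\<delta>1 = 128 * R + 43" "\<delta>2 = 64 * R + 21"
    unfolding \<delta>1_def \<delta>2_def n_eq by simp_all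
  have \<delta>2_minus: "(64 * R + 21) - 2 = 64 * R + 19" "(64 * R + 21) - 8 = 64 * R + 13"
    "(64 * R + 21) - 10 = 64 * R + 11"
    by simp_all
  have below_n: "x \<le> n - 1 \<longleftrightarrow> x < n" for x
    unfolding n_eq by linarith
  have "3 dvd n" "6 dvd (n - 3)"
    unfolding n_eq by presburger+
  then show ?thesis
    unfolding \<delta> \<delta>2_minus below_n using coset_leader_delta1 coset_leader_delta2 coset_leader_delta3
      coset_leader_delta4 coset_leader_delta5 coset_leaders_above_delta5 by auto
qed

end
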